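(* Consider IMR(1) (order $p=1$) as described in the context, where exactly the first $\ell$ data points are labeled, i.e. $L=\{1,\dots,\ell\}$. If $$\left|\sum_{t=1}^{\ell-1}\left(y^{(0)}_t-x_t\right)\left(y^{(0)}_{t+1}-x_{t+1}\right)\right|<\sum_{t=1}^{\ell-1}\left(y^{(0)}_t-x_t\right)^2,$$ then $|\phi_1^{(k)}|<1$ for all iterations $k$ with $0\le k\le n-\ell$.
   Context: Let $n\ge 1$ and let $x=(x_1,\dots,x_n)\in\mathbb{R}^n$ be an observed time series. A set $L\subseteq\{1,\dots,n\}$ of labeled indices is given, together with labeled values $y^{(0)}_t$ for $t\in L$; for $t\notin L$ put $y^{(0)}_t=x_t$. Fix a threshold $\tau\ge 0$. IMR(1) produces sequences $y^{(k)}\in\mathbb{R}^n$, $k=0,1,2,\dots$; write $z^{(k)}_t=y^{(k)}_t-x_t$. In iteration $k$: (S1) $\phi^{(k)}_1=\dfrac{\sum_{t=1}^{n-1}z^{(k)}_tz^{(k)}_{t+1}}{\sum_{t=1}^{n-1}(z^{(k)}_t)^2}$ (ordinary least squares). (S2) For each $t\in\{2,\dots,n\}\setminus L$ compute $\hat y^{(k)}_t=\phi^{(k)}_1z^{(k)}_{t-1}+x_t$; $t$ is a candidate only if $|\hat y^{(k)}_t-y^{(k)}_t|>\tau$. (S3) If candidates exist, choose a candidate $t^*$ minimizing $|\hat y^{(k)}_t-x_t|$ (ties broken arbitrarily), set $y^{(k+1)}_{t^*}=\hat y^{(k)}_{t^*}$ and keep all other values; if no candidate exists, the algorithm terminates and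 $y^{(k+1)}=y^{(k)}$ from then on. Labeled values are never modified. *)

theory Defs
  imports Complex_Main
begin

text \<open>Series are functions nat => real; only indices 1..n are meaningful.\<close>

definition imr_phi :: "nat \<Rightarrow> (nat \<Rightarrow> real) \<Rightarrow> real" where
  "imr_phi n z = (\<Sum>t=1..n-1. z t * z (t+1)) / (\<Sum>t=1..n-1. (z t)^2)"

definition imr_z :: "(nat \<Rightarrow> real) \<Rightarrow> (nat \<Rightarrow> real) \<Rightarrow> nat \<Rightarrow> real" where
  "imr_z x y t = y t - x t"

definition imr_yhat :: "nat \<Rightarrow> (nat \<Rightarrow> real) \<Rightarrow> (nat \<Rightarrow> real) \<Rightarrow> nat \<Rightarrow> real" where
  "imr_yhat n x y t = imr_phi n (imr_z x y) * imr_z x y (t-1) + x t"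

definition imr_cand :: "nat \<Rightarrow> nat set \<Rightarrow> real \<Rightarrow> (nat \<Rightarrow> real) \<Rightarrow> (nat \<Rightarrow> real) \<Rightarrow> nat \<Rightarrow> bool" where
  "imr_cand n L \<tau> x y t \<longleftrightarrow> t \<in> {2..n} - L \<and> \<bar>imr_yhat n x y t - y t\<bar> > \<tau>"

text \<open>One IMR(1) iteration (S1)-(S3), with arbitrary tie-breaking: y' is a possible successor of y.\<close>
definition imr_step :: "nat \<Rightarrow> nat set \<Rightarrow> real \<Rightarrow> (nat \<Rightarrow> real) \<Rightarrow> (nat \<Rightarrow> real) \<Rightarrow> (nat \<Rightarrow> real) \<Rightarrow> bool" where
  "imr_step n L \<tau> x y y' \<longleftrightarrow>
     (if \<exists>t. imr_cand n L \<tau> x y t then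
        (\<exists>s. imr_cand n L \<tau> x y s \<and>
             (\<forall>t. imr_cand n L \<tau> x y t \<longrightarrow>
                  \<bar>imr_yhat n x y s - x s\<bar> \<le> \<bar>imr_yhat n x y t - x t\<bar>) \<and>
             y' = y(s := imr_yhat n x y s))
      else y' = y)"

end

theory Submission
  imports Defs
begin

(*
  Write z = y - x. Initially z vanishes beyond the labelled prefix 1..l. A position s is a
  candidate only if z s differs from phi * z (s - 1), so it lies at most one place beyond the
  support of z, and repairing it sets z s := phi * z (s - 1). Hence after k steps z is supported
  in 1..l+k with |z (l+k)| <= |z l|, provided |phi| < 1 held in all earlier steps. For such z
  and l + k <= n, AM-GM and telescoping bound the tail of the lag-one products,
  sum (t = l..<n) |z t * z (t+1)| <= sum (t = l..<n) (z t)^2, and adding this to the strict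
  inequality on the unchanged labelled prefix gives |phi| < 1 again.
*)

lemma sum_abs_mult_Suc_le_sum_squares:
  fixes z :: "nat \<Rightarrow> real"
  assumes "l \<le> n" and "(z n)\<^sup>2 \<le> (z l)\<^sup>2"
  shows "(\<Sum>t=l..<n. \<bar>z t * z (t+1)\<bar>) \<le> (\<Sum>t=l..<n. (z t)\<^sup>2)"
proof -
  have am_gm: "2 * \<bar>z t * z (t+1)\<bar> \<le> (z t)\<^sup>2 + (z (t+1))\<^sup>2" for t
    using sum_squares_bound[of "\<bar>z t\<bar>" "\<bar>z (t+1)\<bar>"] by (simp add: abs_mult)
  have telescope: "(\<Sum>t=l..<n. (z (t+1))\<^sup>2) = (\<Sum>t=l..<n. (z t)\<^sup>2) + (z n)\<^sup>2 - (z l)\<^sup>2"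
    using sum_Suc_diff'[OF assms(1), of "\<lambda>t. (z t)\<^sup>2"] by (simp add: sum_subtractf)
  have "2 * (\<Sum>t=l..<n. \<bar>z t * z (t+1)\<bar>) \<le> (\<Sum>t=l..<n. (z t)\<^sup>2) + (\<Sum>t=l..<n. (z (t+1))\<^sup>2)"
    unfolding sum_distrib_left sum.distrib[symmetric] by (rule sum_mono) (rule am_gm)
  then show ?thesis
    using telescope assms(2) by linarith
qed

definition decaying_tail :: "nat \<Rightarrow> nat \<Rightarrow> (nat \<Rightarrow> real) \<Rightarrow> bool" where
  "decaying_tail l m z \<longleftrightarrow> (\<forall>t>m. z t = 0) \<and> \<bar>z m\<bar> \<le> \<bar>z l\<bar>"

lemma imr_phi_abs_less_one:
  fixes z :: "nat \<Rightarrow> real"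
  assumes "l \<le> m" and "m \<le> n" and "decaying_tail l m z"
    and head: "\<bar>\<Sum>t=1..l-1. z t * z (t+1)\<bar> < (\<Sum>t=1..l-1. (z t)\<^sup>2)"
  shows "\<bar>imr_phi n z\<bar> < 1"
proof -
  have "l \<ge> 2"
    using head by (cases "l \<ge> 2") auto
  then have "{1..n-1} = {1..l-1} \<union> {l..<n}" and "{1..l-1} \<inter> {l..<n} = {}"
    using assms(1,2) by auto
  then have split_sum: "(\<Sum>t=1..n-1. f t) = (\<Sum>t=1..l-1. f t) + (\<Sum>t=l..<n. f t)"
    for f :: "nat \<Rightarrow> real"
    by (simp add: sum.union_disjoint)
  have "(z n)\<^sup>2 \<le> (z l)\<^sup>2"
    using assms(2,3) unfolding decaying_tail_def
    by (cases "m = n") (auto simp: abs_le_square_iff)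
  then have "\<bar>\<Sum>t=l..<n. z t * z (t+1)\<bar> \<le> (\<Sum>t=l..<n. (z t)\<^sup>2)"
    using sum_abs[of "\<lambda>t. z t * z (t+1)" "{l..<n}"]
      sum_abs_mult_Suc_le_sum_squares[of l n z] assms(1,2) by linarith
  then have "\<bar>\<Sum>t=1..n-1. z t * z (t+1)\<bar> < (\<Sum>t=1..n-1. (z t)\<^sup>2)"
    using head unfolding split_sum by linarith
  then show ?thesis
    unfolding imr_phi_def by (simp add: abs_divide divide_less_eq)
qed

lemma imr_step_cases:
  assumes "imr_step n L \<tau> x y y'"
  obtains (unchanged) "y' = y"
  | (repaired) s where "imr_cand n L \<tau> x y s" and "y' = y(s := imr_yhat n x y s)"
  using assms unfolding imr_step_def by (auto split: if_splits)

lemma imr_step_keeps_labels: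
  assumes "imr_step n L \<tau> x y y'" and "t \<in> L"
  shows "y' t = y t"
  using assms by (cases rule: imr_step_cases) (auto simp: imr_cand_def)

lemma imr_cand_le_Suc_support:
  assumes "\<tau> \<ge> 0" and "imr_cand n L \<tau> x y s" and "\<forall>t>m. imr_z x y t = 0"
  shows "s \<le> Suc m"
proof (rule ccontr)
  assume "\<not> s \<le> Suc m"
  then have "imr_yhat n x y s = y s"
    using assms(3) by (simp add: imr_yhat_def imr_z_def)
  then show False
    using assms(1,2) by (simp add: imr_cand_def)
qed

lemma imr_step_decaying_tail:
  assumes "\<tau> \<ge> 0" and "\<bar>imr_phi n (imr_z x y)\<bar> < 1"
    and "decaying_tail l m (imr_z x y)" and "imr_step n {1..l} \<tau> x y y'"
  shows "decaying_tail l (Suc m) (imr_z x y')"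
  using assms(4)
proof (cases rule: imr_step_cases)
  case unchanged
  then show ?thesis
    using assms(3) by (simp add: decaying_tail_def)
next
  case (repaired s)
  let ?z = "imr_z x y" and ?z' = "imr_z x y'"
  have "s > l" and "s \<le> Suc m"
    using repaired(1) imr_cand_le_Suc_support[OF assms(1) repaired(1)] assms(3)
    by (auto simp: imr_cand_def decaying_tail_def)
  have z'_s: "?z' s = imr_phi n ?z * ?z (s - 1)"
    and z'_other: "t \<noteq> s \<Longrightarrow> ?z' t = ?z t" for t
    using repaired(2) by (simp_all add: imr_z_def imr_yhat_def)
  have "\<bar>?z' (Suc m)\<bar> \<le> \<bar>?z' l\<bar>"
  proof (cases "s = Suc m")
    case True
    then have "\<bar>?z' (Suc m)\<bar> = \<bar>imr_phi n ?z\<bar> * \<bar>?z m\<bar>"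
      using z'_s by (simp add: abs_mult)
    also have "\<dots> \<le> \<bar>?z m\<bar>"
      using assms(2) by (simp add: mult_left_le_one_le)
    also have "\<dots> \<le> \<bar>?z' l\<bar>"
      using assms(3) z'_other \<open>s > l\<close> by (simp add: decaying_tail_def)
    finally show ?thesis .
  next
    case False
    then show ?thesis
      using assms(3) z'_other by (simp add: decaying_tail_def)
  qed
  moreover have "\<forall>t>Suc m. ?z' t = 0"
    using assms(3) z'_other \<open>s \<le> Suc m\<close> by (simp add: decaying_tail_def)
  ultimately show ?thesis
    by (simp add: decaying_tail_def)
qed

theorem lemma2:
  fixes n l :: nat and x :: "nat \<Rightarrow> real" and \<tau> :: real
    and Y :: "nat \<Rightarrow> nat \<Rightarrow> real"
  assumes "n \<ge> 1" and "l \<le> n" and "\<tau> \<ge> 0"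
    and "\<And>t. t \<notin> {1..l} \<Longrightarrow> Y 0 t = x t"
    and "\<And>k. imr_step n {1..l} \<tau> x (Y k) (Y (Suc k))"
    and "\<bar>\<Sum>t=1..l-1. (Y 0 t - x t) * (Y 0 (t+1) - x (t+1))\<bar> < (\<Sum>t=1..l-1. (Y 0 t - x t)^2)"
  shows "\<forall>k. k \<le> n - l \<longrightarrow> \<bar>imr_phi n (imr_z x (Y k))\<bar> < 1"
proof -
  have labels: "Y k t = Y 0 t" if "t \<in> {1..l}" for k t
    by (induction k) (use imr_step_keeps_labels[OF assms(5) that] in auto)
  have head: "\<bar>\<Sum>t=1..l-1. imr_z x (Y k) t * imr_z x (Y k) (t+1)\<bar>
      < (\<Sum>t=1..l-1. (imr_z x (Y k) t)\<^sup>2)" for k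
  proof -
    have "t \<in> {1..l-1} \<Longrightarrow> imr_z x (Y k) t = Y 0 t - x t \<and> imr_z x (Y k) (t+1) = Y 0 (t+1) - x (t+1)"
      for t
      using labels[of t k] labels[of "t+1" k] by (auto simp: imr_z_def)
    then show ?thesis
      using assms(6) by (metis (no_types, lifting) sum.cong)
  qed
  have phi: "\<bar>imr_phi n (imr_z x (Y k))\<bar> < 1"
    if "decaying_tail l (l + k) (imr_z x (Y k))" and "k \<le> n - l" for k
    using imr_phi_abs_less_one[OF _ _ that(1) head] that(2) assms(2) by simp
  have "decaying_tail l (l + k) (imr_z x (Y k))" if "k \<le> n - l" for k
    using that
  proof (induction k)
    case 0
    then show ?case
      using assms(4) by (simp add: decaying_tail_def imr_z_def)
  next
    case (Suc k)
    then have "decaying_tail l (l + k) (imr_z x (Y k))" and "k \<le> n - l"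
      by simp_all
    then show ?case
      using imr_step_decaying_tail[OF assms(3) phi _ assms(5)] by simp
  qed
  then show ?thesis
    using phi by blast
qed

end
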